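(* Assume the standing assumptions, and let $p_0:(0,\infty)\to(0,\infty)$ be the inverse function of $\mathcal L$, i.e. $\mathcal L(p_0(z))=z$. Then $p_0$ is strictly superadditive: $$p_0(x+y)>p_0(x)+p_0(y)\qquad\text{for all } x,y>0.$$ In particular, $p_0(n\beta)>\sum_{j=1}^k p_0(m_j\beta)$ whenever $\beta>0$, $k\ge2$, $m_1,\dots,m_k\in\mathbb N$ and $n=m_1+\dots+m_k$.
   Context: Standing assumptions: $k:(0,\infty)\to[0,\infty)$ is locally integrable, its Laplace transform $\mathcal K(p)=\int_0^\infty e^{-pt}k(t)\,dt$ is finite for $p>0$ and is a Stieltjes function, and $\mathcal L(p)=p\mathcal K(p)$. Moreover $\mathcal K(p)\to\infty$ as $p\to0^+$, $\mathcal K(p)\to0$ as $p\to\infty$, $\mathcal L(p)\to0$ as $p\to0^+$, and $\mathcal L(p)\to\infty$ as $p\to\infty$. A Stieltjes function is $\varphi(\lambda)=a/\lambda+b+\int_{[0,\infty)}\frac{\sigma(dt)}{\lambda+t}$ with $a,b\ge0$ and $\sigma$ a Borel measure on $[0,\infty)$ with $\int(1+t)^{-1}\sigma(dt)<\infty$. Under these assumptions $\mathcal L(p)=\int_{[0,\infty)}\frac{p}{p+t}\sigma(dt)$ for such a measure, and $\mathcal L$ is a strictly increasing bijection of $(0,\infty)$ onto itself. *)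

theory Defs
  imports "HOL-Analysis.Analysis"
begin

definition stieltjes_function :: "(real \<Rightarrow> real) \<Rightarrow> bool" where
  "stieltjes_function \<phi> \<longleftrightarrow>
     (\<exists>a b (\<sigma> :: real measure).
        a \<ge> 0 \<and> b \<ge> 0 \<and> sets \<sigma> = sets borel \<and> emeasure \<sigma> {..<0} = 0 \<and>
        integrable \<sigma> (\<lambda>t. 1 / (1 + t)) \<and>
        (\<forall>l>0. \<phi> l = a / l + b + (\<integral>t. 1 / (l + t) \<partial>\<sigma>)))"

definition laplace :: "(real \<Rightarrow> real) \<Rightarrow> real \<Rightarrow> real" where
  "laplace k p = (LINT t:{0<..}|lborel. exp (- p * t) * k t)"

end

theory Submission
  imports Defs
begin

text \<open>Write \<open>L p = p * K p\<close>. The Stieltjes representation gives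
  \<open>L p = a + b p + \<integral> p / (p + t) d\<sigma>(t)\<close>, and each integrand \<open>p / (p + t)\<close> (\<open>t \<ge> 0\<close>) is
  nondecreasing and strictly subadditive in \<open>p\<close>. Hence \<open>L\<close> is nondecreasing and strictly
  subadditive as soon as \<open>a > 0\<close> or \<open>\<sigma> \<noteq> 0\<close>, i.e.\ unless \<open>K\<close> is constant, which
  \<open>K(0+) = \<infinity>\<close> excludes. If \<open>p\<^sub>0(x + y) \<le> p\<^sub>0 x + p\<^sub>0 y\<close>, applying \<open>L\<close> would give
  \<open>x + y \<le> L (p\<^sub>0 x + p\<^sub>0 y) < x + y\<close>.\<close>

lemma AE_nonneg_if_negative_null:
  fixes \<sigma> :: "real measure"
  assumes "sets \<sigma> = sets borel" and "emeasure \<sigma> {..<0} = 0"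
  shows "AE t in \<sigma>. 0 \<le> t"
  by (rule AE_I'[of "{..<0}"])
    (auto simp: null_sets_def assms sets_eq_imp_space_eq[OF assms(1)])

lemma integrable_inverse_shift:
  fixes \<sigma> :: "real measure"
  assumes sets: "sets \<sigma> = sets borel" and nonneg: "AE t in \<sigma>. 0 \<le> t"
    and int: "integrable \<sigma> (\<lambda>t. 1 / (1 + t))" and "l > 0"
  shows "integrable \<sigma> (\<lambda>t. 1 / (l + t))"
proof (rule Bochner_Integration.integrable_bound[OF integrable_mult_right[OF int]])
  define c where "c = max 1 (1 / l)"
  show "(\<lambda>t. 1 / (l + t)) \<in> borel_measurable \<sigma>"
    unfolding measurable_cong_sets[OF sets refl] by measurable
  have "c \<ge> 1" and "c * l \<ge> 1"
    using \<open>l > 0\<close> by (auto simp: c_def field_simps max_def)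
  show "AE t in \<sigma>. norm (1 / (l + t)) \<le> norm (c * (1 / (1 + t)))"
    using nonneg
  proof eventually_elim
    case (elim t)
    have "1 + t \<le> c * (l + t)"
      using \<open>c \<ge> 1\<close> \<open>c * l \<ge> 1\<close> mult_right_mono[OF \<open>c \<ge> 1\<close> elim]
      by (simp add: distrib_left)
    then show ?case
      using elim \<open>l > 0\<close> \<open>c \<ge> 1\<close> by (auto simp: field_simps)
  qed
qed

lemma stieltjes_function_times_repr:
  assumes "stieltjes_function \<phi>"
  obtains a b and \<sigma> :: "real measure"
  where "a \<ge> 0" "b \<ge> 0" "AE t in \<sigma>. 0 \<le> t"
    "\<And>l. l > 0 \<Longrightarrow> integrable \<sigma> (\<lambda>t. l / (l + t))"
    "\<And>l. l > 0 \<Longrightarrow> l * \<phi> l = a + b * l + (\<integral>t. l / (l + t) \<partial>\<sigma>)"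
proof -
  obtain a b and \<sigma> :: "real measure" where "a \<ge> 0" "b \<ge> 0"
    and sets: "sets \<sigma> = sets borel" and null: "emeasure \<sigma> {..<0} = 0"
    and int: "integrable \<sigma> (\<lambda>t. 1 / (1 + t))"
    and repr: "\<And>l. l > 0 \<Longrightarrow> \<phi> l = a / l + b + (\<integral>t. 1 / (l + t) \<partial>\<sigma>)"
    using assms unfolding stieltjes_function_def by blast
  have nonneg: "AE t in \<sigma>. 0 \<le> t"
    using AE_nonneg_if_negative_null[OF sets null] .
  show thesis
  proof (rule that[OF \<open>a \<ge> 0\<close> \<open>b \<ge> 0\<close> nonneg])
    fix l :: real assume "l > 0"
    show "integrable \<sigma> (\<lambda>t. l / (l + t))"
      using integrable_mult_right[OF integrable_inverse_shift[OF sets nonneg int \<open>l > 0\<close>], where c = l]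
      by simp
    have "(\<integral>t. l / (l + t) \<partial>\<sigma>) = l * (\<integral>t. 1 / (l + t) \<partial>\<sigma>)"
      using integral_mult_right_zero[where c = l and M = \<sigma> and f = "\<lambda>t. 1 / (l + t)"] by simp
    then show "l * \<phi> l = a + b * l + (\<integral>t. l / (l + t) \<partial>\<sigma>)"
      using repr[OF \<open>l > 0\<close>] \<open>l > 0\<close> by (simp add: distrib_left)
  qed
qed

lemma stieltjes_times_mono:
  assumes "stieltjes_function \<phi>" and "0 < p" and "p \<le> q"
  shows "p * \<phi> p \<le> q * \<phi> q"
proof -
  obtain a b and \<sigma> :: "real measure" where "a \<ge> 0" "b \<ge> 0" and nonneg: "AE t in \<sigma>. 0 \<le> t"
    and int: "\<And>l. l > 0 \<Longrightarrow> integrable \<sigma> (\<lambda>t. l / (l + t))"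
    and repr: "\<And>l. l > 0 \<Longrightarrow> l * \<phi> l = a + b * l + (\<integral>t. l / (l + t) \<partial>\<sigma>)"
    by (rule stieltjes_function_times_repr[OF assms(1)]) blast
  have "(\<integral>t. p / (p + t) \<partial>\<sigma>) \<le> (\<integral>t. q / (q + t) \<partial>\<sigma>)"
  proof (rule integral_mono_AE[OF int int])
    show "AE t in \<sigma>. p / (p + t) \<le> q / (q + t)"
      using nonneg
    proof eventually_elim
      case (elim t)
      have "p * (q + t) \<le> q * (p + t)"
        using mult_right_mono[OF \<open>p \<le> q\<close> elim] by (simp add: algebra_simps)
      then show ?case
        using assms elim by (simp add: divide_simps)
    qed
  qed (use assms in auto)
  moreover have "b * p \<le> b * q"
    using \<open>p \<le> q\<close> \<open>b \<ge> 0\<close> by (rule mult_left_mono)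
  moreover have "0 < q"
    using assms by simp
  ultimately show ?thesis
    using repr[OF \<open>0 < p\<close>] repr[OF \<open>0 < q\<close>] by linarith
qed

lemma stieltjes_times_strict_subadd:
  assumes "stieltjes_function \<phi>" and nonconst: "\<not> (\<exists>c. \<forall>l>0. \<phi> l = c)"
    and "0 < p" and "0 < q"
  shows "(p + q) * \<phi> (p + q) < p * \<phi> p + q * \<phi> q"
proof -
  obtain a b and \<sigma> :: "real measure" where "a \<ge> 0" "b \<ge> 0" and nonneg: "AE t in \<sigma>. 0 \<le> t"
    and int: "\<And>l. l > 0 \<Longrightarrow> integrable \<sigma> (\<lambda>t. l / (l + t))"
    and repr: "\<And>l. l > 0 \<Longrightarrow> l * \<phi> l = a + b * l + (\<integral>t. l / (l + t) \<partial>\<sigma>)"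
    by (rule stieltjes_function_times_repr[OF assms(1)]) blast
  define f where "f t = p / (p + t) + q / (q + t) - (p + q) / (p + q + t)" for t
  have int_p: "integrable \<sigma> (\<lambda>t. p / (p + t))"
    and int_q: "integrable \<sigma> (\<lambda>t. q / (q + t))"
    and int_pq: "integrable \<sigma> (\<lambda>t. (p + q) / (p + q + t))"
    using int assms by auto
  have int_f: "integrable \<sigma> f"
    unfolding f_def using int_p int_q int_pq by auto
  have integral_f: "(\<integral>t. f t \<partial>\<sigma>) = (\<integral>t. p / (p + t) \<partial>\<sigma>) + (\<integral>t. q / (q + t) \<partial>\<sigma>)
      - (\<integral>t. (p + q) / (p + q + t) \<partial>\<sigma>)"
    unfolding f_def using int_p int_q int_pq by simp
  have f_pos: "AE t in \<sigma>. 0 < f t"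
    using nonneg
  proof eventually_elim
    case (elim t)
    have "p / (p + q + t) < p / (p + t)" and "q / (p + q + t) < q / (q + t)"
      using assms elim by (simp_all add: divide_simps)
    then show ?case
      unfolding f_def by (simp add: add_divide_distrib)
  qed
  have f_nonneg: "AE t in \<sigma>. 0 \<le> f t"
    using f_pos by (auto elim: eventually_mono)
  have "0 < a + (\<integral>t. f t \<partial>\<sigma>)"
  proof (rule ccontr)
    assume "\<not> 0 < a + (\<integral>t. f t \<partial>\<sigma>)"
    moreover have "0 \<le> (\<integral>t. f t \<partial>\<sigma>)"
      using f_nonneg by (rule integral_nonneg_AE)
    ultimately have "a = 0" and "(\<integral>t. f t \<partial>\<sigma>) = 0"
      using \<open>a \<ge> 0\<close> by auto
    then have "AE t in \<sigma>. f t = 0"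
      using integral_nonneg_eq_0_iff_AE[OF int_f f_nonneg] by simp
    with f_pos have null: "AE t in \<sigma>. False"
      by eventually_elim simp
    have "(\<integral>t. l / (l + t) \<partial>\<sigma>) = 0" for l
      by (intro integral_eq_zero_AE eventually_mono[OF null]) simp
    then have "\<forall>l>0. \<phi> l = b"
      using repr \<open>a = 0\<close> by (simp add: mult.commute[of b])
    with nonconst show False by blast
  qed
  moreover have "0 < p + q"
    using assms by simp
  ultimately show ?thesis
    using repr[OF \<open>0 < p\<close>] repr[OF \<open>0 < q\<close>] repr[OF \<open>0 < p + q\<close>] integral_f
      distrib_left[of b p q] by linarith
qed

lemma superadd_inverse_of_strict_subadd:
  fixes L p0 :: "real \<Rightarrow> real"
  assumes mono: "\<And>p q. 0 < p \<Longrightarrow> p \<le> q \<Longrightarrow> L p \<le> L q"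
    and subadd: "\<And>p q. 0 < p \<Longrightarrow> 0 < q \<Longrightarrow> L (p + q) < L p + L q"
    and inverse: "\<And>z. 0 < z \<Longrightarrow> 0 < p0 z \<and> L (p0 z) = z"
    and "0 < x" and "0 < y"
  shows "p0 x + p0 y < p0 (x + y)"
proof (rule ccontr)
  assume "\<not> p0 x + p0 y < p0 (x + y)"
  then have "x + y \<le> L (p0 x + p0 y)"
    using mono[of "p0 (x + y)"] inverse assms(4,5) by (metis add_pos_pos linorder_not_less)
  also have "\<dots> < x + y"
    using subadd[of "p0 x" "p0 y"] inverse assms(4,5) by auto
  finally show False by simp
qed

lemma sum_le_superadd:
  fixes f :: "real \<Rightarrow> real"
  assumes superadd: "\<And>x y. 0 < x \<Longrightarrow> 0 < y \<Longrightarrow> f x + f y < f (x + y)"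
    and "finite A" and "A \<noteq> {}" and pos: "\<And>i. i \<in> A \<Longrightarrow> 0 < g i"
  shows "(\<Sum>i\<in>A. f (g i)) \<le> f (\<Sum>i\<in>A. g i)"
  using assms(2-3) pos
proof (induction A rule: finite_ne_induct)
  case (insert i F)
  have "0 < (\<Sum>j\<in>F. g j)"
    using insert by (intro sum_pos) auto
  then have "f (g i) + f (\<Sum>j\<in>F. g j) < f (g i + (\<Sum>j\<in>F. g j))"
    using superadd insert.prems by simp
  with insert show ?case by simp
qed simp

lemma sum_less_superadd:
  fixes f :: "real \<Rightarrow> real"
  assumes superadd: "\<And>x y. 0 < x \<Longrightarrow> 0 < y \<Longrightarrow> f x + f y < f (x + y)"
    and "finite A" and "2 \<le> card A" and pos: "\<And>i. i \<in> A \<Longrightarrow> 0 < g i"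
  shows "(\<Sum>i\<in>A. f (g i)) < f (\<Sum>i\<in>A. g i)"
proof -
  obtain i where "i \<in> A"
    using \<open>2 \<le> card A\<close> by fastforce
  define F where "F = A - {i}"
  have "finite F" and "card F = card A - 1"
    using \<open>i \<in> A\<close> \<open>finite A\<close> by (simp_all add: F_def)
  then have "F \<noteq> {}"
    using \<open>2 \<le> card A\<close> by auto
  have split: "(\<Sum>j\<in>A. h j) = h i + (\<Sum>j\<in>F. h j)" for h :: "_ \<Rightarrow> real"
    using \<open>i \<in> A\<close> \<open>finite A\<close> by (simp add: F_def sum.remove)
  have pos_F: "\<And>j. j \<in> F \<Longrightarrow> 0 < g j"
    using pos by (simp add: F_def)
  have "0 < (\<Sum>j\<in>F. g j)"
    using \<open>finite F\<close> \<open>F \<noteq> {}\<close> pos_F by (rule sum_pos)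
  have "(\<Sum>j\<in>A. f (g j)) = f (g i) + (\<Sum>j\<in>F. f (g j))"
    by (rule split)
  also have "\<dots> \<le> f (g i) + f (\<Sum>j\<in>F. g j)"
    by (intro add_left_mono sum_le_superadd[where f = f and g = g, OF superadd
          \<open>finite F\<close> \<open>F \<noteq> {}\<close> pos_F])
  also have "\<dots> < f (g i + (\<Sum>j\<in>F. g j))"
    using superadd[OF pos[OF \<open>i \<in> A\<close>] \<open>0 < (\<Sum>j\<in>F. g j)\<close>] .
  also have "\<dots> = f (\<Sum>j\<in>A. g j)"
    by (simp only: split[of g])
  finally show ?thesis .
qed

lemma not_constant_if_filterlim_at_top:
  fixes \<phi> :: "real \<Rightarrow> real"
  assumes "filterlim \<phi> at_top (at_right 0)"
  shows "\<not> (\<exists>c. \<forall>l>0. \<phi> l = c)"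
proof
  assume "\<exists>c. \<forall>l>0. \<phi> l = c"
  then obtain c where "\<forall>l>0. \<phi> l = c" ..
  then have "\<forall>\<^sub>F l in at_right 0. \<phi> l = c"
    using eventually_at_right_less[of 0] by (auto elim: eventually_mono)
  moreover have "\<forall>\<^sub>F l in at_right 0. c + 1 \<le> \<phi> l"
    using assms by (simp add: filterlim_at_top)
  ultimately have "\<forall>\<^sub>F l in at_right (0::real). False"
    by eventually_elim simp
  then show False by simp
qed

theorem lemma4p1:
  fixes k :: "real \<Rightarrow> real" and p0 :: "real \<Rightarrow> real"
  assumes k_nonneg: "\<forall>t>0. k t \<ge> 0"
    and k_locint: "\<forall>a b. 0 < a \<and> a \<le> b \<longrightarrow> set_integrable lborel {a..b} k"
    and laplace_finite: "\<forall>p>0. set_integrable lborel {0<..} (\<lambda>t. exp (- p * t) * k t)"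
    and stieltjes: "stieltjes_function (laplace k)"
    and K_at_0: "filterlim (laplace k) at_top (at_right 0)"
    and K_at_top: "(laplace k \<longlongrightarrow> 0) at_top"
    and L_at_0: "((\<lambda>p. p * laplace k p) \<longlongrightarrow> 0) (at_right 0)"
    and L_at_top: "filterlim (\<lambda>p. p * laplace k p) at_top at_top"
    and p0_inv: "\<forall>z>0. p0 z > 0 \<and> p0 z * laplace k (p0 z) = z"
  shows "(\<forall>x>0. \<forall>y>0. p0 (x + y) > p0 x + p0 y) \<and>
         (\<forall>\<beta>>0. \<forall>r::nat. \<forall>m::nat \<Rightarrow> nat.
            r \<ge> 2 \<and> (\<forall>j\<in>{1..r}. m j \<ge> 1) \<longrightarrow>
            p0 (real (\<Sum>j=1..r. m j) * \<beta>) > (\<Sum>j=1..r. p0 (real (m j) * \<beta>)))"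
proof -
  \<comment> \<open>Only the Stieltjes property, \<open>K(0+) = \<infinity>\<close> and the inverse property of \<open>p0\<close> are needed.\<close>
  have superadd: "p0 x + p0 y < p0 (x + y)" if "0 < x" "0 < y" for x y
  proof (rule superadd_inverse_of_strict_subadd[where L = "\<lambda>p. p * laplace k p"])
    show "p * laplace k p \<le> q * laplace k q" if "0 < p" "p \<le> q" for p q
      using stieltjes_times_mono[OF stieltjes that] .
    show "(p + q) * laplace k (p + q) < p * laplace k p + q * laplace k q"
      if "0 < p" "0 < q" for p q
      using stieltjes_times_strict_subadd[OF stieltjes
          not_constant_if_filterlim_at_top[OF K_at_0] that] .
  qed (use p0_inv that in auto)
  moreover have "(\<Sum>j=1..r. p0 (real (m j) * \<beta>)) < p0 (real (\<Sum>j=1..r. m j) * \<beta>)"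
    if "0 < \<beta>" "2 \<le> r" "\<forall>j\<in>{1..r}. 1 \<le> m j"
    for \<beta> and r :: nat and m :: "nat \<Rightarrow> nat"
  proof -
    have "0 < real (m j) * \<beta>" if "j \<in> {1..r}" for j
      using \<open>0 < \<beta>\<close> \<open>\<forall>j\<in>{1..r}. 1 \<le> m j\<close> that by force
    then have "(\<Sum>j=1..r. p0 (real (m j) * \<beta>)) < p0 (\<Sum>j=1..r. real (m j) * \<beta>)"
      using \<open>2 \<le> r\<close> by (intro sum_less_superadd[where f = p0] superadd) auto
    then show ?thesis
      by (simp add: sum_distrib_right)
  qed
  ultimately show ?thesis by auto
qed

end
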